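(* The solution $u$ of the problem "find $u\in X$ with $a(u,v)=F(v)$ for all $v\in X$" satisfies: (i) $u\in X^{(\mathbf{C})}$; (ii) $u\in X^{(\gamma\mathbf{C})}$ if $\gamma\in L^1_\Gamma(\mathbb{R}^\mu)$; (iii) $u\in X^{(\gamma^2)}$ if $\gamma\in L^2_\Gamma(\mathbb{R}^\mu)$.
   Context: $D\subset\mathbb{R}^d$ bounded open with smooth boundary; $f\in H^{-1}(D)$; $\Gamma=\Gamma_{N_g}\otimes\Gamma_\nu$ a product probability measure on $\mathbb{R}^\mu=\mathbb{R}^{N_g}\times\mathbb{R}^\nu$, $E_\Gamma$ integration against it. $[\mathrm{C}]:D\times\mathbb{R}^\mu\to\mathbb{M}_n^+(\mathbb{R})$ measurable (the parameterized random field coefficient $\mathcal{K}^{(m,N)}(\mathbf{x},\mathbf{y},\mathcal{M}_{[a]}(\mathbf{z}))$ in the paper) with a constant $\alpha>0$ and positive measurable $\gamma<\infty$ on $\mathbb{R}^\mu$ such that $\Gamma$-a.e. and a.e. in $\mathbf{x}$, $\alpha\|\mathbf{h}\|_2^2\le\langle[\mathrm{C}]\mathbf{h},\mathbf{h}\rangle_2\le\gamma\|\mathbf{h}\|_2^2$. $X=H^1_0(D)\otimes L^2_\Gamma(\mathbb{R}^\mu)$, $\|v\|_X^2=E_\Gamma(\int_D\|\nabla v\|_2^2)$; $a(u,v)=E_\Gamma(\int_D\nabla v\cdot[\mathrm{C}]\nabla u\,d\mathbf{x})$; $F(v)=E_\Gamma(f(v))$. For $s,r\ge0$, $X^{(\gamma^s\mathbf{C}^r)}$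 is the space of functions $v$ on $D\times\mathbb{R}^\mu$ with $\|v\|_{X^{(\gamma^s\mathbf{C}^r)}}^2=E_\Gamma(\gamma^s\int_D\nabla v\cdot[\mathrm{C}]^r\nabla v\,d\mathbf{x})<\infty$. The problem has a unique solution $u\in X$. *)

theory Defs
  imports "HOL-Analysis.Analysis" "HOL-Probability.Probability"
begin

definition partial :: "'d::finite \<Rightarrow> (real^'d \<Rightarrow> real) \<Rightarrow> real^'d \<Rightarrow> real" where
  "partial i f x = frechet_derivative f (at x) (axis i 1)"

fun iter_partial :: "'d::finite list \<Rightarrow> (real^'d \<Rightarrow> real) \<Rightarrow> real^'d \<Rightarrow> real" where
  "iter_partial [] f = f"
| "iter_partial (i # is) f = partial i (iter_partial is f)"

definition smooth_on :: "(real^'d::finite) set \<Rightarrow> (real^'d \<Rightarrow> real) \<Rightarrow> bool" where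
  "smooth_on S f \<longleftrightarrow> (\<forall>is. (iter_partial is f) differentiable_on S)"

definition grad :: "(real^'d::finite \<Rightarrow> real) \<Rightarrow> real^'d \<Rightarrow> real^'d" where
  "grad f x = (\<chi> i. partial i f x)"

definition test_fun :: "(real^'d::finite) set \<Rightarrow> (real^'d \<Rightarrow> real) \<Rightarrow> bool" where
  "test_fun D \<phi> \<longleftrightarrow> smooth_on UNIV \<phi> \<and> compact (closure {x. \<phi> x \<noteq> 0})
      \<and> closure {x. \<phi> x \<noteq> 0} \<subseteq> D"

definition smooth_boundary :: "(real^'d::finite) set \<Rightarrow> bool" where
  "smooth_boundary D \<longleftrightarrow> (\<forall>x\<in>frontier D. \<exists>r>0. \<exists>\<rho>. smooth_on (ball x r) \<rho> \<and>
      grad \<rho> x \<noteq> 0 \<and> D \<inter> ball x r = {z\<in>ball x r. \<rho> z < 0})"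

definition is_weak_grad :: "(real^'d::finite) set \<Rightarrow> (real^'d \<Rightarrow> real) \<Rightarrow> (real^'d \<Rightarrow> real^'d) \<Rightarrow> bool" where
  "is_weak_grad D v g \<longleftrightarrow>
     (\<forall>K. compact K \<and> K \<subseteq> D \<longrightarrow> set_integrable lborel K v \<and> set_integrable lborel K g) \<and>
     (\<forall>\<phi>. test_fun D \<phi> \<longrightarrow> (\<forall>i.
        (LINT x:D|lborel. v x * partial i \<phi> x) = - (LINT x:D|lborel. g x $ i * \<phi> x)))"

definition H10 :: "(real^'d::finite) set \<Rightarrow> (real^'d \<Rightarrow> real) set" where
  "H10 D = {v. \<exists>g. is_weak_grad D v g \<and>
      set_integrable lborel D (\<lambda>x. (v x)\<^sup>2) \<and> set_integrable lborel D (\<lambda>x. (norm (g x))\<^sup>2) \<and>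
      (\<exists>\<phi>. (\<forall>k. test_fun D (\<phi> k)) \<and>
         (\<lambda>k. LINT x:D|lborel. (v x - \<phi> k x)\<^sup>2 + (norm (g x - grad (\<phi> k) x))\<^sup>2) \<longlonglongrightarrow> 0)}"

definition wgrad :: "(real^'d::finite) set \<Rightarrow> (real^'d \<Rightarrow> real) \<Rightarrow> real^'d \<Rightarrow> real^'d" where
  "wgrad D v = (SOME g. is_weak_grad D v g)"

definition Hminus1 :: "(real^'d::finite) set \<Rightarrow> ((real^'d \<Rightarrow> real) \<Rightarrow> real) set" where
  "Hminus1 D = {f. (\<forall>v\<in>H10 D. \<forall>w\<in>H10 D. \<forall>a b. f (\<lambda>x. a * v x + b * w x) = a * f v + b * f w) \<and>
      (\<exists>B. \<forall>v\<in>H10 D. \<bar>f v\<bar> \<le> B * sqrt (LINT x:D|lborel. (norm (wgrad D v x))\<^sup>2))}"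

definition X_grad_ok :: "(real^'d::finite) set \<Rightarrow> 'y measure \<Rightarrow> (real^'d \<Rightarrow> 'y \<Rightarrow> real)
    \<Rightarrow> (real^'d \<Rightarrow> 'y \<Rightarrow> real^'d) \<Rightarrow> bool" where
  "X_grad_ok D \<Gamma> u G \<longleftrightarrow>
     (\<lambda>(x,y). u x y) \<in> borel_measurable (restrict_space lborel D \<Otimes>\<^sub>M \<Gamma>) \<and>
     (\<lambda>(x,y). G x y) \<in> borel_measurable (restrict_space lborel D \<Otimes>\<^sub>M \<Gamma>) \<and>
     (AE y in \<Gamma>. (\<lambda>x. u x y) \<in> H10 D \<and> is_weak_grad D (\<lambda>x. u x y) (\<lambda>x. G x y))"

definition X_space :: "(real^'d::finite) set \<Rightarrow> 'y measure \<Rightarrow> (real^'d \<Rightarrow> 'y \<Rightarrow> real) set" where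
  "X_space D \<Gamma> = {u. \<exists>G. X_grad_ok D \<Gamma> u G \<and>
      (\<integral>\<^sup>+ y. (\<integral>\<^sup>+ x. indicator D x * ennreal ((norm (G x y))\<^sup>2) \<partial>lborel) \<partial>\<Gamma>) < \<infinity>}"

definition Xgrad :: "(real^'d::finite) set \<Rightarrow> 'y measure \<Rightarrow> (real^'d \<Rightarrow> 'y \<Rightarrow> real)
    \<Rightarrow> real^'d \<Rightarrow> 'y \<Rightarrow> real^'d" where
  "Xgrad D \<Gamma> u = (SOME G. X_grad_ok D \<Gamma> u G)"

definition a_form :: "(real^'d::finite) set \<Rightarrow> 'y measure \<Rightarrow> (real^'d \<Rightarrow> 'y \<Rightarrow> real^'d^'d)
    \<Rightarrow> (real^'d \<Rightarrow> 'y \<Rightarrow> real) \<Rightarrow> (real^'d \<Rightarrow> 'y \<Rightarrow> real) \<Rightarrow> real" where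
  "a_form D \<Gamma> C u v = (\<integral>y. (LINT x:D|lborel. Xgrad D \<Gamma> v x y \<bullet> (C x y *v Xgrad D \<Gamma> u x y)) \<partial>\<Gamma>)"

definition F_form :: "'y measure \<Rightarrow> ((real^'d::finite \<Rightarrow> real) \<Rightarrow> real)
    \<Rightarrow> (real^'d \<Rightarrow> 'y \<Rightarrow> real) \<Rightarrow> real" where
  "F_form \<Gamma> f v = (\<integral>y. f (\<lambda>x. v x y) \<partial>\<Gamma>)"

text \<open>The paper's X^{(gamma^s C^r)} is the case
  w = gamma^s, K = [C]^r; we need (s,r) = (0,1), (1,1), (2,0) (with [C]^0 = identity).\<close>
definition X_weighted :: "(real^'d::finite) set \<Rightarrow> 'y measure \<Rightarrow> ('y \<Rightarrow> real)
    \<Rightarrow> (real^'d \<Rightarrow> 'y \<Rightarrow> real^'d^'d) \<Rightarrow> (real^'d \<Rightarrow> 'y \<Rightarrow> real) set" where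
  "X_weighted D \<Gamma> w K = {v. \<exists>G. X_grad_ok D \<Gamma> v G \<and>
      (\<integral>\<^sup>+ y. (\<integral>\<^sup>+ x. indicator D x * ennreal (w y * (G x y \<bullet> (K x y *v G x y))) \<partial>lborel) \<partial>\<Gamma>) < \<infinity>}"

end

theory Submission
  imports Defs "HOL-Computational_Algebra.Polynomial"
begin

text \<open>Test the equation with \<open>v = u \<one>\<^sub>A\<close> for measurable \<open>A \<subseteq> \<real>\<^sup>\<mu>\<close>. Writing
  \<open>E(y) = \<integral>\<^sub>D \<nabla>u \<cdot> [C] \<nabla>u dx\<close> for the energy of the slice \<open>u(\<cdot>, y)\<close>, this gives
  \<open>\<integral>\<^sub>A E d\<Gamma> = \<integral>\<^sub>A f(u(\<cdot>, y)) d\<Gamma>(y)\<close> for every \<open>A\<close>. By coercivity,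
  \<open>f(u(\<cdot>, y)) \<le> \<parallel>f\<parallel> \<parallel>\<nabla>u(\<cdot>, y)\<parallel> \<le> c \<surd>E(y)\<close> with \<open>c = \<parallel>f\<parallel> / \<surd>\<alpha>\<close>, and localising
  the identity yields \<open>E \<le> c\<^sup>2\<close> and \<open>\<parallel>\<nabla>u(\<cdot>, y)\<parallel>\<^sup>2 \<le> c\<^sup>2 / \<alpha>\<close> for \<open>\<Gamma>\<close>-almost every \<open>y\<close>.
  Integrating these bounds against \<open>1\<close>, \<open>\<gamma>\<close> and \<open>\<gamma>\<^sup>2\<close> gives (i), (ii) and (iii).

  The gradients in \<open>a\<close>, in the norm of \<open>H\<^sup>-\<^sup>1(D)\<close> and in the definition of \<open>X\<close> are chosen
  independently of each other; they agree because weak gradients are unique almost everywhere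
  (fundamental lemma of the calculus of variations, proved with smooth bump functions of boxes).\<close>

definition real_smooth :: "(real \<Rightarrow> real) \<Rightarrow> bool" where
  "real_smooth r \<longleftrightarrow> (\<exists>F. F 0 = r \<and> (\<forall>n t. (F n has_real_derivative F (Suc n) t) (at t)))"

lemma real_smooth_affine:
  assumes "real_smooth r"
  shows "real_smooth (\<lambda>t. r (c * t + d))"
proof -
  obtain F where F: "F 0 = r" "\<And>n t. (F n has_real_derivative F (Suc n) t) (at t)"
    using assms unfolding real_smooth_def by blast
  show ?thesis unfolding real_smooth_def
  proof (intro exI[of _ "\<lambda>n t. c ^ n * F n (c * t + d)"] conjI allI)
    fix n t
    have "((\<lambda>t. F n (c * t + d)) has_real_derivative F (Suc n) (c * t + d) * c) (at t)"
      by (rule DERIV_chain2[OF F(2)]) (auto intro!: derivative_eq_intros)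
    then show "((\<lambda>t. c ^ n * F n (c * t + d)) has_real_derivative c ^ Suc n * F (Suc n) (c * t + d)) (at t)"
      using DERIV_cmult by (fastforce simp: algebra_simps)
  qed (simp add: F)
qed

lemma real_smooth_deriv:
  assumes "real_smooth r"
  obtains r' where "real_smooth r'" "\<And>t. (r has_real_derivative r' t) (at t)"
proof -
  obtain F where F: "F 0 = r" "\<And>n t. (F n has_real_derivative F (Suc n) t) (at t)"
    using assms unfolding real_smooth_def by blast
  have "real_smooth (F 1)"
    unfolding real_smooth_def by (auto intro!: exI[of _ "\<lambda>n. F (Suc n)"] F(2))
  with F show thesis using that by (metis One_nat_def)
qed

subsection \<open>The flat function \<open>t \<mapsto> exp (-1/t)\<close>\<close>

definition flat_exp :: "real \<Rightarrow> real" where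
  "flat_exp t = (if t > 0 then exp (- 1 / t) else 0)"

text \<open>For \<open>t > 0\<close> the \<open>n\<close>-th derivative of \<open>flat_exp\<close> is \<open>P\<^sub>n(1/t) exp(-1/t)\<close>, where
  \<open>P\<^sub>n\<^sub>+\<^sub>1(s) = s\<^sup>2 (P\<^sub>n(s) - P\<^sub>n'(s))\<close>; at \<open>t = 0\<close> all derivatives vanish.\<close>

fun flat_exp_poly :: "nat \<Rightarrow> real poly" where
  "flat_exp_poly 0 = 1"
| "flat_exp_poly (Suc n) = [:0, 0, 1:] * (flat_exp_poly n - pderiv (flat_exp_poly n))"

definition flat_exp_deriv :: "nat \<Rightarrow> real \<Rightarrow> real" where
  "flat_exp_deriv n t = (if t > 0 then poly (flat_exp_poly n) (1 / t) * exp (- 1 / t) else 0)"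

lemma poly_times_exp_neg_tendsto_0: "((\<lambda>s. poly p s * exp (- s)) \<longlongrightarrow> (0::real)) at_top"
proof -
  have eq: "poly p s * exp (- s) = (\<Sum>i\<le>degree p. coeff p i * (s ^ i / exp s))" for s
    by (simp add: poly_altdef sum_distrib_right exp_minus divide_inverse mult.assoc)
  have "((\<lambda>s. \<Sum>i\<le>degree p. coeff p i * (s ^ i / exp s)) \<longlongrightarrow> (\<Sum>i\<le>degree p. coeff p i * 0)) at_top"
    by (intro tendsto_sum tendsto_mult tendsto_const tendsto_power_div_exp_0)
  then show ?thesis by (simp add: eq)
qed

lemma flat_exp_deriv_pos:
  assumes "t > 0"
  shows "(flat_exp_deriv n has_real_derivative flat_exp_deriv (Suc n) t) (at t)"
proof -
  let ?P = "flat_exp_poly n"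
  have "((\<lambda>t. poly ?P (1 / t) * exp (- 1 / t)) has_real_derivative
      poly (pderiv ?P) (1 / t) * (- 1 / t\<^sup>2) * exp (- 1 / t) + exp (- 1 / t) * (1 / t\<^sup>2) * poly ?P (1 / t)) (at t)"
  proof (rule DERIV_mult)
    have "((\<lambda>t. 1 / t) has_real_derivative - 1 / t\<^sup>2) (at t)"
      using assms by (auto intro!: derivative_eq_intros simp: power2_eq_square field_simps)
    from DERIV_chain2[OF poly_DERIV this]
    show "((\<lambda>t. poly ?P (1 / t)) has_real_derivative poly (pderiv ?P) (1 / t) * (- 1 / t\<^sup>2)) (at t)"
      by simp
    show "((\<lambda>t. exp (- 1 / t)) has_real_derivative exp (- 1 / t) * (1 / t\<^sup>2)) (at t)"
      using assms by (auto intro!: derivative_eq_intros simp: power2_eq_square field_simps)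
  qed
  moreover have "poly (pderiv ?P) (1 / t) * (- 1 / t\<^sup>2) * exp (- 1 / t) + exp (- 1 / t) * (1 / t\<^sup>2) * poly ?P (1 / t)
      = flat_exp_deriv (Suc n) t"
    using assms by (simp add: flat_exp_deriv_def algebra_simps power2_eq_square)
  ultimately have "((\<lambda>t. poly ?P (1 / t) * exp (- 1 / t)) has_real_derivative flat_exp_deriv (Suc n) t) (at t)"
    by simp
  then show ?thesis
    by (rule has_field_derivative_transform_within_open[where S="{0<..}"])
       (use assms in \<open>auto simp: flat_exp_deriv_def\<close>)
qed

lemma flat_exp_deriv_neg:
  assumes "t < 0"
  shows "(flat_exp_deriv n has_real_derivative flat_exp_deriv (Suc n) t) (at t)"
proof -
  have "((\<lambda>_. 0) has_real_derivative 0) (at t)" by simp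
  then have "(flat_exp_deriv n has_real_derivative 0) (at t)"
    by (rule has_field_derivative_transform_within_open[where S="{..<0}"])
       (use assms in \<open>auto simp: flat_exp_deriv_def\<close>)
  then show ?thesis using assms by (simp add: flat_exp_deriv_def)
qed

lemma flat_exp_deriv_0: "(flat_exp_deriv n has_real_derivative flat_exp_deriv (Suc n) 0) (at 0)"
proof -
  let ?q = "\<lambda>h. (flat_exp_deriv n (0 + h) - flat_exp_deriv n 0) / h"
  have "(?q \<longlongrightarrow> 0) (at_left 0)"
  proof (rule Lim_transform_eventually[OF tendsto_const])
    show "\<forall>\<^sub>F h in at_left 0. 0 = ?q h"
      unfolding eventually_at_left_field by (auto intro!: exI[of _ "-1"] simp: flat_exp_deriv_def)
  qed
  moreover have "(?q \<longlongrightarrow> 0) (at_right 0)"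
  proof -
    have "((\<lambda>h. poly (pCons 0 (flat_exp_poly n)) (inverse h) * exp (- inverse h)) \<longlongrightarrow> (0::real)) (at_right 0)"
      by (rule filterlim_compose[OF poly_times_exp_neg_tendsto_0 filterlim_inverse_at_top_right])
    then show ?thesis
    proof (rule Lim_transform_eventually)
      show "\<forall>\<^sub>F h in at_right 0. poly (pCons 0 (flat_exp_poly n)) (inverse h) * exp (- inverse h) = ?q h"
        unfolding eventually_at_right_field
        by (auto intro!: exI[of _ 1] simp: flat_exp_deriv_def field_simps)
    qed
  qed
  ultimately have "(?q \<longlongrightarrow> 0) (at 0)"
    by (rule filterlim_split_at)
  then show ?thesis by (simp add: DERIV_def flat_exp_deriv_def)
qed

lemma real_smooth_flat_exp: "real_smooth flat_exp"
proof -
  have "(flat_exp_deriv n has_real_derivative flat_exp_deriv (Suc n) t) (at t)" for n t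
    by (cases t "0::real" rule: linorder_cases)
       (auto intro: flat_exp_deriv_neg flat_exp_deriv_pos simp: flat_exp_deriv_0)
  moreover have "flat_exp_deriv 0 = flat_exp"
    by (auto simp: flat_exp_deriv_def flat_exp_def fun_eq_iff)
  ultimately show ?thesis unfolding real_smooth_def by blast
qed

lemma flat_exp_nonzero_iff: "flat_exp t \<noteq> 0 \<longleftrightarrow> t > 0"
  by (simp add: flat_exp_def)

lemma flat_exp_bounds: "0 \<le> flat_exp t" "flat_exp t \<le> 1"
  by (auto simp: flat_exp_def)

lemma flat_exp_scale_tendsto_1:
  assumes "c > 0"
  shows "(\<lambda>n. flat_exp (real (Suc n) * c)) \<longlonglongrightarrow> 1"
proof -
  have "(\<lambda>n. exp (- (inverse (real (Suc n)) * inverse c))) \<longlonglongrightarrow> exp (- (0 * inverse c))"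
    by (intro tendsto_exp tendsto_minus tendsto_mult tendsto_const LIMSEQ_inverse_real_of_nat)
  moreover have "flat_exp (real (Suc n) * c) = exp (- (inverse (real (Suc n)) * inverse c))" for n
    using assms by (simp add: flat_exp_def divide_inverse inverse_mult_distrib)
  ultimately show ?thesis by simp
qed

subsection \<open>Smooth bump functions of boxes\<close>

text \<open>Sums and products of smooth functions of single coordinates form a class closed under
  partial differentiation, hence contained in \<open>C\<^sup>\<infinity>\<close>.\<close>

inductive coordwise_smooth :: "(real^'d::finite \<Rightarrow> real) \<Rightarrow> bool" where
  coord: "real_smooth r \<Longrightarrow> coordwise_smooth (\<lambda>x. r (x $ j))"
| const: "coordwise_smooth (\<lambda>x. c)"
| add: "coordwise_smooth f \<Longrightarrow> coordwise_smooth g \<Longrightarrow> coordwise_smooth (\<lambda>x. f x + g x)"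
| mult: "coordwise_smooth f \<Longrightarrow> coordwise_smooth g \<Longrightarrow> coordwise_smooth (\<lambda>x. f x * g x)"

lemma coordwise_smooth_has_derivative:
  assumes "coordwise_smooth f"
  obtains f' where "\<And>x. (f has_derivative f' x) (at x)" "\<And>i. coordwise_smooth (\<lambda>x. f' x (axis i 1))"
  using assms
proof (induction arbitrary: thesis rule: coordwise_smooth.induct)
  case (coord r j)
  obtain r' where r': "real_smooth r'" "\<And>t. (r has_real_derivative r' t) (at t)"
    using real_smooth_deriv[OF coord.hyps] by blast
  have "((\<lambda>x. r (x $ j)) has_derivative (\<lambda>h. r' (x $ j) * (h $ j))) (at x)" for x
  proof (rule has_derivative_compose[of "\<lambda>x. x $ j" "\<lambda>h. h $ j"])
    show "((\<lambda>x. x $ j) has_derivative (\<lambda>h. h $ j)) (at x)"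
      by (rule bounded_linear_imp_has_derivative[OF bounded_linear_vec_nth])
    show "(r has_derivative (\<lambda>h. r' (x $ j) * h)) (at (x $ j))"
      using r'(2) by (simp add: has_field_derivative_def)
  qed
  moreover have "coordwise_smooth (\<lambda>x. r' (x $ j) * (axis i 1 $ j))" for i
    by (intro coordwise_smooth.mult coordwise_smooth.coord r'(1) coordwise_smooth.const)
  ultimately show ?case by (rule coord.prems)
next
  case (const c)
  show ?case by (rule const.prems[of "\<lambda>x h. 0"]) (auto intro: coordwise_smooth.const)
next
  case (add f g)
  obtain f' g' where "\<And>x. (f has_derivative f' x) (at x)" "\<And>i. coordwise_smooth (\<lambda>x. f' x (axis i 1))"
    "\<And>x. (g has_derivative g' x) (at x)" "\<And>i. coordwise_smooth (\<lambda>x. g' x (axis i 1))"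
    using add.IH by metis
  then show ?case
    by (intro add.prems[of "\<lambda>x h. f' x h + g' x h"]) (auto intro!: has_derivative_add coordwise_smooth.add)
next
  case (mult f g)
  obtain f' g' where "\<And>x. (f has_derivative f' x) (at x)" "\<And>i. coordwise_smooth (\<lambda>x. f' x (axis i 1))"
    "\<And>x. (g has_derivative g' x) (at x)" "\<And>i. coordwise_smooth (\<lambda>x. g' x (axis i 1))"
    using mult.IH by metis
  then show ?case
    by (intro mult.prems[of "\<lambda>x h. f x * g' x h + f' x h * g x"])
       (auto intro!: has_derivative_mult coordwise_smooth.add coordwise_smooth.mult mult.hyps)
qed

lemma coordwise_smooth_partial: "coordwise_smooth f \<Longrightarrow> coordwise_smooth (partial i f)"
proof (erule coordwise_smooth_has_derivative)
  fix f' assume f': "\<And>x. (f has_derivative f' x) (at x)" "\<And>i. coordwise_smooth (\<lambda>x. f' x (axis i 1))"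
  have "partial i f = (\<lambda>x. f' x (axis i 1))"
    unfolding partial_def fun_eq_iff using frechet_derivative_at[OF f'(1)] by simp
  then show ?thesis using f'(2) by simp
qed

lemma coordwise_smooth_differentiable_on: "coordwise_smooth f \<Longrightarrow> f differentiable_on S"
  by (erule coordwise_smooth_has_derivative)
     (auto simp: differentiable_on_def differentiable_def intro: has_derivative_at_withinI)

lemma coordwise_smooth_imp_smooth_on: "coordwise_smooth f \<Longrightarrow> smooth_on S f"
proof -
  assume "coordwise_smooth f"
  then have "coordwise_smooth (iter_partial is f)" for "is"
    by (induction "is") (auto intro: coordwise_smooth_partial)
  then show ?thesis unfolding smooth_on_def using coordwise_smooth_differentiable_on by blast
qed

lemma coordwise_smooth_prod:
  "finite S \<Longrightarrow> (\<And>i. i \<in> S \<Longrightarrow> coordwise_smooth (f i)) \<Longrightarrow> coordwise_smooth (\<lambda>x. \<Prod>i\<in>S. f i x)"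
  by (induction S rule: finite_induct) (auto intro: coordwise_smooth.const coordwise_smooth.mult)

definition box_bump :: "nat \<Rightarrow> real^'d::finite \<Rightarrow> real^'d \<Rightarrow> real^'d \<Rightarrow> real" where
  "box_bump n a b x =
     (\<Prod>i\<in>UNIV. flat_exp (real (Suc n) * (x $ i - a $ i)) * flat_exp (real (Suc n) * (b $ i - x $ i)))"

lemma coordwise_smooth_box_bump:
  fixes a b :: "real^'d::finite"
  shows "coordwise_smooth (box_bump n a b)"
proof -
  have "coordwise_smooth (\<lambda>x. flat_exp (real (Suc n) * (x $ i - a $ i)))"
    "coordwise_smooth (\<lambda>x. flat_exp (real (Suc n) * (b $ i - x $ i)))" for i
    using coordwise_smooth.coord[OF real_smooth_affine[OF real_smooth_flat_exp,
          of "real (Suc n)" "- real (Suc n) * a $ i"], of i]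
      coordwise_smooth.coord[OF real_smooth_affine[OF real_smooth_flat_exp,
          of "- real (Suc n)" "real (Suc n) * b $ i"], of i]
    by (simp_all add: algebra_simps)
  then show ?thesis
    unfolding box_bump_def by (intro coordwise_smooth_prod coordwise_smooth.mult) auto
qed

lemma box_bump_nonzero_iff: "box_bump n a b x \<noteq> 0 \<longleftrightarrow> x \<in> box a b"
  by (simp add: box_bump_def flat_exp_nonzero_iff zero_less_mult_iff mem_box_cart)

lemma box_bump_bounds: "0 \<le> box_bump n a b x" "box_bump n a b x \<le> 1"
  unfolding box_bump_def
  by (auto intro!: prod_nonneg prod_le_1 mult_le_one simp: flat_exp_bounds)

lemma box_bump_tendsto_indicator:
  fixes a b x :: "real^'d::finite"
  shows "(\<lambda>n. box_bump n a b x) \<longlonglongrightarrow> indicator (box a b) x"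
proof (cases "x \<in> box a b")
  case True
  then have "a $ i < x $ i" "x $ i < b $ i" for i by (auto simp: mem_box_cart)
  then have factor: "(\<lambda>n. flat_exp (real (Suc n) * (x $ i - a $ i)) * flat_exp (real (Suc n) * (b $ i - x $ i)))
      \<longlonglongrightarrow> 1 * 1" for i
    by (intro tendsto_mult flat_exp_scale_tendsto_1) auto
  have "(\<lambda>n. box_bump n a b x) \<longlonglongrightarrow> (\<Prod>i\<in>(UNIV::'d set). 1 * 1)"
    unfolding box_bump_def by (rule tendsto_prod) (rule factor)
  then show ?thesis using True by simp
next
  case False
  then have "box_bump n a b x = 0" for n
    using box_bump_nonzero_iff by blast
  then show ?thesis using False by simp
qed

lemma test_fun_box_bump:
  assumes "cbox a b \<subseteq> D"
  shows "test_fun D (box_bump n a b)"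
proof -
  have "{x. box_bump n a b x \<noteq> 0} = box a b" using box_bump_nonzero_iff by blast
  moreover have "closure (box a b) \<subseteq> cbox a b"
    by (rule closure_minimal[OF box_subset_cbox closed_cbox])
  ultimately show ?thesis
    unfolding test_fun_def using assms
    by (auto intro!: coordwise_smooth_imp_smooth_on coordwise_smooth_box_bump bounded_box
        simp: compact_closure)
qed

lemma borel_measurable_box_bump [measurable]: "box_bump n a b \<in> borel_measurable borel"
  by (intro borel_measurable_continuous_onI differentiable_imp_continuous_on
      coordwise_smooth_differentiable_on coordwise_smooth_box_bump)

subsection \<open>The fundamental lemma of the calculus of variations\<close>

lemma integral_eq_0_iff_nn_integral_eq:
  fixes g :: "_ \<Rightarrow> real"
  assumes "integrable M g"
  shows "integral\<^sup>L M g = 0 \<longleftrightarrow> (\<integral>\<^sup>+x. ennreal (g x) \<partial>M) = (\<integral>\<^sup>+x. ennreal (- g x) \<partial>M)"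
proof -
  have "(\<integral>\<^sup>+x. ennreal (h x) \<partial>M) < \<top>" if "integrable M h" for h :: "_ \<Rightarrow> real"
    using integrableD(2)[OF that] by (simp add: less_top infinity_ennreal_def)
  from this[OF assms] this[OF integrable_minus[OF assms]] show ?thesis
    unfolding real_lebesgue_integral_def[OF assms] by (metis ennreal_enn2real eq_iff_diff_eq_0)
qed

lemma AE_zero_if_box_integrals_zero:
  fixes f :: "real^'d::finite \<Rightarrow> real"
  assumes f: "integrable lborel f" and box: "\<And>a b. (LINT x:box a b|lborel. f x) = 0"
  shows "AE x in lborel. f x = 0"
proof -
  have [measurable]: "f \<in> borel_measurable borel"
    using f by simp
  define M1 where "M1 = density lborel (\<lambda>x. ennreal (f x))"
  define M2 where "M2 = density lborel (\<lambda>x. ennreal (- f x))"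
  define E where "E = range (\<lambda>(a, b). box a b :: (real^'d) set)"
  have intA: "integrable lborel (\<lambda>x. indicator A x * f x)" if "A \<in> sets borel" for A
    using integrable_real_mult_indicator[of A lborel f] f that by (simp add: mult.commute)
  have em: "emeasure M1 A = (\<integral>\<^sup>+x. ennreal (indicator A x * f x) \<partial>lborel)"
    "emeasure M2 A = (\<integral>\<^sup>+x. ennreal (- (indicator A x * f x)) \<partial>lborel)" if "A \<in> sets borel" for A
    unfolding M1_def M2_def using that
    by (subst emeasure_density; auto intro!: nn_integral_cong simp: indicator_def)+
  have "M1 = M2"
  proof (rule measure_eqI_generator_eq[where E=E and \<Omega>=UNIV and A="\<lambda>n. box (- (\<chi> i. real n)) (\<chi> i. real n)"])
    show "Int_stable E"
      by (auto simp: E_def Int_stable_def box_Int_box)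
    show "E \<subseteq> Pow UNIV" by simp
    show "emeasure M1 X = emeasure M2 X" if "X \<in> E" for X
      using that box unfolding E_def
      by (auto simp: em set_lebesgue_integral_def integral_eq_0_iff_nn_integral_eq[OF intA, symmetric])
    have "sets (borel::(real^'d) measure) = sigma_sets UNIV E"
      unfolding E_def by (subst borel_eq_box) (rule sets_measure_of, simp)
    then show "sets M1 = sigma_sets UNIV E" "sets M2 = sigma_sets UNIV E"
      by (simp_all add: M1_def M2_def)
    show "range (\<lambda>n. box (- (\<chi> i. real n)) (\<chi> i. real n)) \<subseteq> E" by (auto simp: E_def)
    show "(\<Union>n. box (- (\<chi> i. real n)) (\<chi> i. real n :: real^'d)) = UNIV"
    proof (intro set_eqI iffI UNIV_I)
      fix x :: "real^'d"
      obtain n :: nat where n: "norm x < real n" using reals_Archimedean2 by blast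
      have "\<bar>x $ i\<bar> < real n" for i using component_le_norm_cart[of x i] n by linarith
      then have "x \<in> box (- (\<chi> i. real n)) (\<chi> i. real n)"
        by (auto simp: mem_box_cart abs_less_iff) (metis minus_less_iff)
      then show "x \<in> (\<Union>n. box (- (\<chi> i. real n)) (\<chi> i. real n))" by blast
    qed
    have "emeasure M1 (space M1) < \<infinity>"
      using integrableD(2)[OF f] by (simp add: M1_def emeasure_density less_top)
    then show "emeasure M1 (box (- (\<chi> i. real n)) (\<chi> i. real n)) \<noteq> \<infinity>" for n
      using emeasure_space[of M1] by (metis infinity_ennreal_def leD le_less_trans order.not_eq_order_implies_strict)
  qed
  have "AE x in lborel. f x = 0"
  proof (rule density_unique_real[OF f integrable_zero])
    fix A :: "(real^'d) set" assume "A \<in> sets lborel"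
    then have A: "A \<in> sets borel" by simp
    from \<open>M1 = M2\<close> have "emeasure M1 A = emeasure M2 A" by simp
    then show "(LINT x:A|lborel. f x) = (LINT x:A|lborel. 0)"
      by (simp add: em[OF A] set_lebesgue_integral_def integral_eq_0_iff_nn_integral_eq[OF intA[OF A]])
  qed
  then show ?thesis .
qed

lemma test_fun_orthogonal_box_integral_zero:
  fixes h :: "real^'d::finite \<Rightarrow> real"
  assumes loc: "\<And>K. compact K \<Longrightarrow> K \<subseteq> D \<Longrightarrow> set_integrable lborel K h"
    and orth: "\<And>\<phi>. test_fun D \<phi> \<Longrightarrow> (LINT x:D|lborel. h x * \<phi> x) = 0"
    and ab: "cbox a b \<subseteq> D"
  shows "(LINT x:box a b|lborel. h x) = 0"
proof -
  define g where "g x = indicator (cbox a b) x * h x" for x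
  have g: "integrable lborel g"
    unfolding g_def using loc[OF compact_cbox ab] by (simp add: set_integrable_def)
  then have [measurable]: "g \<in> borel_measurable borel" by simp
  have "(\<integral>x. g x * box_bump n a b x \<partial>lborel) = (LINT x:D|lborel. h x * box_bump n a b x)" for n
    unfolding set_lebesgue_integral_def
  proof (rule Bochner_Integration.integral_cong[OF refl])
    fix x
    show "g x * box_bump n a b x = indicator D x *\<^sub>R (h x * box_bump n a b x)"
      using box_bump_nonzero_iff[of n a b x] box_subset_cbox[of a b] ab
      by (cases "x \<in> box a b") (auto simp: g_def indicator_def)
  qed
  then have zero: "(\<integral>x. g x * box_bump n a b x \<partial>lborel) = 0" for n
    using orth[OF test_fun_box_bump[OF ab]] by simp
  have "(\<lambda>n. \<integral>x. g x * box_bump n a b x \<partial>lborel) \<longlonglongrightarrow> (\<integral>x. g x * indicator (box a b) x \<partial>lborel)"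
  proof (rule integral_dominated_convergence[where w="\<lambda>x. norm (g x)"])
    show "AE x in lborel. (\<lambda>n. g x * box_bump n a b x) \<longlonglongrightarrow> g x * indicator (box a b) x"
      by (intro AE_I2 tendsto_mult tendsto_const box_bump_tendsto_indicator)
    show "AE x in lborel. norm (g x * box_bump n a b x) \<le> norm (g x)" for n
      by (intro AE_I2)
         (simp add: abs_mult abs_of_nonneg[OF box_bump_bounds(1)] mult_left_le box_bump_bounds(2))
    show "integrable lborel (\<lambda>x. norm (g x))"
      using g by simp
  qed simp_all
  moreover have "(\<integral>x. g x * indicator (box a b) x \<partial>lborel) = (LINT x:box a b|lborel. h x)"
    unfolding set_lebesgue_integral_def
  proof (rule Bochner_Integration.integral_cong[OF refl])
    show "g x * indicator (box a b) x = indicator (box a b) x *\<^sub>R h x" for x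
      using box_subset_cbox[of a b] by (cases "x \<in> box a b") (auto simp: g_def)
  qed
  ultimately show ?thesis
    unfolding zero by (simp add: LIMSEQ_const_iff)
qed

lemma test_fun_orthogonal_AE_zero_on_cbox:
  fixes h :: "real^'d::finite \<Rightarrow> real"
  assumes loc: "\<And>K. compact K \<Longrightarrow> K \<subseteq> D \<Longrightarrow> set_integrable lborel K h"
    and orth: "\<And>\<phi>. test_fun D \<phi> \<Longrightarrow> (LINT x:D|lborel. h x * \<phi> x) = 0"
    and uv: "cbox u v \<subseteq> D"
  shows "AE x in lborel. x \<in> cbox u v \<longrightarrow> h x = 0"
proof -
  define f where "f x = indicator (cbox u v) x * h x" for x
  have "cbox u v - box u v \<in> null_sets lborel"
  proof -
    have "emeasure lborel (cbox u v - box u v) = emeasure lborel (cbox u v) - emeasure lborel (box u v)"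
      using emeasure_lborel_box_finite[of u v]
      by (intro emeasure_Diff) (auto simp: box_subset_cbox infinity_ennreal_def)
    also have "\<dots> = 0" by (simp add: emeasure_lborel_cbox_eq emeasure_lborel_box_eq)
    finally show ?thesis by (auto simp: null_sets_def)
  qed
  have "AE x in lborel. f x = 0"
  proof (rule AE_zero_if_box_integrals_zero)
    show f: "integrable lborel f"
      unfolding f_def using loc[OF compact_cbox uv] by (simp add: set_integrable_def)
    fix a b :: "real^'d"
    text \<open>Up to the null boundary of \<open>cbox u v\<close>, \<open>box a b \<inter> cbox u v\<close> is the box \<open>box p q\<close>.\<close>
    define p where "p = (\<chi> i. max (a $ i) (u $ i))"
    define q where "q = (\<chi> i. min (b $ i) (v $ i))"
    have "AE x in lborel. indicator (box a b) x * f x = indicator (box p q) x * f x"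
    proof (rule AE_I')
      show "{x \<in> space lborel. indicator (box a b) x * f x \<noteq> indicator (box p q) x * f x}
          \<subseteq> cbox u v - box u v"
        by (auto simp: f_def p_def q_def indicator_def mem_box_cart)
    qed fact
    then have "(LINT x:box a b|lborel. f x) = (LINT x:box p q|lborel. f x)"
      unfolding set_lebesgue_integral_def using f by (intro integral_cong_AE) auto
    also have "\<dots> = (LINT x:box p q|lborel. h x)"
    proof -
      have "box p q \<subseteq> cbox u v"
        by (auto simp: p_def q_def mem_box_cart less_imp_le)
      then show ?thesis
        unfolding set_lebesgue_integral_def
        by (intro Bochner_Integration.integral_cong) (auto simp: f_def indicator_def)
    qed
    also have "\<dots> = 0"
      by (rule test_fun_orthogonal_box_integral_zero[OF loc orth])
         (use uv in \<open>auto simp: p_def q_def mem_box_cart\<close>)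
    finally show "(LINT x:box a b|lborel. f x) = 0" .
  qed
  then show ?thesis by eventually_elim (auto simp: f_def)
qed

lemma test_fun_orthogonal_AE_zero:
  fixes h :: "real^'d::finite \<Rightarrow> real"
  assumes D: "open D"
    and loc: "\<And>K. compact K \<Longrightarrow> K \<subseteq> D \<Longrightarrow> set_integrable lborel K h"
    and orth: "\<And>\<phi>. test_fun D \<phi> \<Longrightarrow> (LINT x:D|lborel. h x * \<phi> x) = 0"
  shows "AE x in lborel. x \<in> D \<longrightarrow> h x = 0"
proof -
  obtain \<D> where \<D>: "countable \<D>" "\<D> \<subseteq> Pow D" "\<And>X. X \<in> \<D> \<Longrightarrow> \<exists>a b. X = cbox a b"
    and "\<Union>\<D> = D"
    using open_countable_Union_open_cbox[OF D] by metis
  have "AE x in lborel. x \<in> X \<longrightarrow> h x = 0" if "X \<in> \<D>" for X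
    using \<D>(2) \<D>(3)[OF that] that test_fun_orthogonal_AE_zero_on_cbox[OF loc orth] by blast
  then have "AE x in lborel. \<forall>X\<in>\<D>. x \<in> X \<longrightarrow> h x = 0"
    by (rule AE_ball_countable'[OF _ \<D>(1)])
  then show ?thesis
    by (rule AE_mp) (use \<open>\<Union>\<D> = D\<close> in \<open>auto intro!: AE_I2\<close>)
qed

lemma borel_measurable_inner_matrix_vector:
  fixes K :: "'a \<Rightarrow> real^'d::finite^'d" and g h :: "'a \<Rightarrow> real^'d"
  assumes "K \<in> borel_measurable M" "g \<in> borel_measurable M" "h \<in> borel_measurable M"
  shows "(\<lambda>p. g p \<bullet> (K p *v h p)) \<in> borel_measurable M"
proof -
  have nth: "(\<lambda>v::'b::real_normed_vector^'d. v $ i) \<in> borel_measurable borel" for i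
    by (intro borel_measurable_continuous_onI linear_continuous_on bounded_linear_vec_nth)
  have "(\<lambda>p. g p $ i) \<in> borel_measurable M" "(\<lambda>p. h p $ i) \<in> borel_measurable M"
    "(\<lambda>p. K p $ i $ j) \<in> borel_measurable M" for i j
    using measurable_compose[OF assms(2) nth] measurable_compose[OF assms(3) nth]
      measurable_compose[OF measurable_compose[OF assms(1) nth] nth] by auto
  moreover have "g p \<bullet> (K p *v h p) = (\<Sum>i\<in>UNIV. g p $ i * (\<Sum>j\<in>UNIV. K p $ i $ j * h p $ j))" for p
    by (simp add: inner_vec_def matrix_vector_mult_def)
  ultimately show ?thesis
    by (simp only:) (intro borel_measurable_sum borel_measurable_times)
qed

lemma borel_measurable_inner_matrix_vector_pair:
  fixes K :: "_ \<Rightarrow> _ \<Rightarrow> real^'d::finite^'d" and g h :: "_ \<Rightarrow> _ \<Rightarrow> real^'d"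
  assumes "(\<lambda>(x, y). K x y) \<in> borel_measurable M" "(\<lambda>(x, y). g x y) \<in> borel_measurable M"
    "(\<lambda>(x, y). h x y) \<in> borel_measurable M"
  shows "(\<lambda>(x, y). g x y \<bullet> (K x y *v h x y)) \<in> borel_measurable M"
  using borel_measurable_inner_matrix_vector[OF assms] by (simp add: case_prod_beta')

lemma borel_measurable_section:
  assumes "(\<lambda>(x, y). F x y) \<in> borel_measurable (M \<Otimes>\<^sub>M N)" "y \<in> space N"
  shows "(\<lambda>x. F x y) \<in> borel_measurable M"
  using measurable_Pair1[OF assms] by simp

lemma borel_measurable_integral_left:
  fixes F :: "_ \<Rightarrow> _ \<Rightarrow> real"
  assumes "sigma_finite_measure M" "(\<lambda>(x, y). F x y) \<in> borel_measurable (M \<Otimes>\<^sub>M N)"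
  shows "(\<lambda>y. \<integral>x. F x y \<partial>M) \<in> borel_measurable N"
proof -
  have "(\<lambda>(y, x). F x y) \<in> borel_measurable (N \<Otimes>\<^sub>M M)"
    using assms(2) measurable_pair_swap_iff[of "\<lambda>(y, x). F x y" N M borel] by (simp add: case_prod_beta')
  then show ?thesis
    using sigma_finite_measure.borel_measurable_lebesgue_integral[OF assms(1), of "\<lambda>y x. F x y" N] by simp
qed

lemma borel_measurable_nn_integral_left:
  fixes F :: "_ \<Rightarrow> _ \<Rightarrow> ennreal"
  assumes "sigma_finite_measure M" "(\<lambda>(x, y). F x y) \<in> borel_measurable (M \<Otimes>\<^sub>M N)"
  shows "(\<lambda>y. \<integral>\<^sup>+x. F x y \<partial>M) \<in> borel_measurable N"
proof -
  have "(\<lambda>(y, x). F x y) \<in> borel_measurable (N \<Otimes>\<^sub>M M)"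
    using assms(2) measurable_pair_swap_iff[of "\<lambda>(y, x). F x y" N M borel] by (simp add: case_prod_beta')
  then show ?thesis
    using sigma_finite_measure.borel_measurable_nn_integral[OF assms(1), of "\<lambda>y x. F x y" N] by simp
qed

lemma set_integral_eq_integral_restrict_space:
  fixes F :: "'a \<Rightarrow> real"
  assumes "A \<in> sets M"
  shows "(LINT x:A|M. F x) = (\<integral>x. F x \<partial>restrict_space M A)"
  using assms by (simp add: set_lebesgue_integral_def integral_restrict_space sets.Int_space_eq2)

lemma nn_integral_indicator_eq_restrict_space:
  assumes "A \<in> sets M"
  shows "(\<integral>\<^sup>+x. indicator A x * F x \<partial>M) = (\<integral>\<^sup>+x. F x \<partial>restrict_space M A)"
  using assms by (simp add: nn_integral_restrict_space sets.Int_space_eq2 mult.commute)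

subsection \<open>Weak gradients\<close>

lemma continuous_on_test_fun: "test_fun D \<phi> \<Longrightarrow> continuous_on UNIV \<phi>"
  unfolding test_fun_def smooth_on_def
  using differentiable_imp_continuous_on iter_partial.simps(1) by metis

lemma set_integrable_mult_test_fun:
  fixes g :: "real^'d::finite \<Rightarrow> real"
  assumes loc: "\<And>K. compact K \<Longrightarrow> K \<subseteq> D \<Longrightarrow> set_integrable lborel K g"
    and \<phi>: "test_fun D \<phi>"
  shows "set_integrable lborel D (\<lambda>x. g x * \<phi> x)"
proof -
  define S where "S = closure {x. \<phi> x \<noteq> 0}"
  have S: "compact S" "S \<subseteq> D" using \<phi> by (auto simp: test_fun_def S_def)
  have cont: "continuous_on UNIV \<phi>" by (rule continuous_on_test_fun[OF \<phi>])
  then have [measurable]: "\<phi> \<in> borel_measurable borel"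
    by (rule borel_measurable_continuous_onI)
  obtain B where B: "\<And>x. x \<in> S \<Longrightarrow> norm (\<phi> x) \<le> B"
    using compact_imp_bounded[OF compact_continuous_image[OF continuous_on_subset[OF cont] S(1)]]
    unfolding bounded_iff by blast
  have g: "integrable lborel (\<lambda>x. indicator S x * g x)"
    using loc[OF S] by (simp add: set_integrable_def)
  have eq: "indicator D x * (g x * \<phi> x) = indicator S x * g x * \<phi> x" for x
  proof (cases "\<phi> x = 0")
    case False
    then have "x \<in> S" "x \<in> D"
      using S(2) closure_subset[of "{x. \<phi> x \<noteq> 0}"] by (auto simp: S_def)
    then show ?thesis by simp
  qed simp
  show ?thesis unfolding set_integrable_def
  proof (rule Bochner_Integration.integrable_bound[where f="\<lambda>x. indicator S x * g x * B"])
    show "integrable lborel (\<lambda>x. indicator S x * g x * B)" using g by simp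
    have "(\<lambda>x. indicator S x * g x) \<in> borel_measurable lborel" using g by auto
    then show "(\<lambda>x. indicator D x *\<^sub>R (g x * \<phi> x)) \<in> borel_measurable lborel"
      by (simp add: eq)
    show "AE x in lborel. norm (indicator D x *\<^sub>R (g x * \<phi> x)) \<le> norm (indicator S x * g x * B)"
    proof (rule AE_I2)
      fix x
      have "norm (indicator D x *\<^sub>R (g x * \<phi> x)) = \<bar>indicator S x * g x\<bar> * \<bar>\<phi> x\<bar>"
        by (metis abs_mult eq real_norm_def real_scaleR_def)
      also have "\<dots> \<le> \<bar>indicator S x * g x\<bar> * \<bar>B\<bar>"
        using B[of x] by (cases "x \<in> S") (auto intro: mult_left_mono)
      also have "\<dots> = norm (indicator S x * g x * B)"
        by (simp add: abs_mult)
      finally show "norm (indicator D x *\<^sub>R (g x * \<phi> x)) \<le> norm (indicator S x * g x * B)" .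
    qed
  qed
qed

lemma is_weak_grad_component_set_integrable:
  assumes "is_weak_grad D v g" "compact K" "K \<subseteq> D"
  shows "set_integrable lborel K (\<lambda>x. g x $ i)"
proof -
  have "integrable lborel (\<lambda>x. indicator K x *\<^sub>R g x)"
    using assms unfolding is_weak_grad_def set_integrable_def by blast
  then have "integrable lborel (\<lambda>x. (indicator K x *\<^sub>R g x) \<bullet> axis i 1)"
    by (rule integrable_inner_left)
  then show ?thesis unfolding set_integrable_def by (simp add: inner_axis)
qed

lemma is_weak_grad_unique:
  fixes D :: "(real^'d::finite) set"
  assumes D: "open D" and g1: "is_weak_grad D v g1" and g2: "is_weak_grad D v g2"
  shows "AE x in lborel. x \<in> D \<longrightarrow> g1 x = g2 x"
proof -
  have comp: "AE x in lborel. x \<in> D \<longrightarrow> g1 x $ i - g2 x $ i = 0" for i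
  proof (rule test_fun_orthogonal_AE_zero[OF D])
    show "set_integrable lborel K (\<lambda>x. g1 x $ i - g2 x $ i)" if "compact K" "K \<subseteq> D" for K
      using is_weak_grad_component_set_integrable[OF g1 that] is_weak_grad_component_set_integrable[OF g2 that]
      by (rule set_integral_diff(1))
  next
    fix \<phi> assume \<phi>: "test_fun D \<phi>"
    have int: "set_integrable lborel D (\<lambda>x. g x $ i * \<phi> x)" if "is_weak_grad D v g" for g
      by (rule set_integrable_mult_test_fun[OF is_weak_grad_component_set_integrable[OF that] \<phi>])
    have "(LINT x:D|lborel. v x * partial i \<phi> x) = - (LINT x:D|lborel. g1 x $ i * \<phi> x)"
      "(LINT x:D|lborel. v x * partial i \<phi> x) = - (LINT x:D|lborel. g2 x $ i * \<phi> x)"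
      using g1 g2 \<phi> unfolding is_weak_grad_def by blast+
    then show "(LINT x:D|lborel. (g1 x $ i - g2 x $ i) * \<phi> x) = 0"
      using set_integral_diff(2)[OF int[OF g1] int[OF g2]] by (simp add: left_diff_distrib)
  qed
  have "AE x in lborel. \<forall>i. x \<in> D \<longrightarrow> g1 x $ i - g2 x $ i = 0"
    by (subst AE_all_countable) (intro allI comp)
  then show ?thesis by eventually_elim (auto simp: vec_eq_iff)
qed

lemma is_weak_grad_measurable:
  fixes D :: "(real^'d::finite) set"
  assumes D: "open D" and g: "is_weak_grad D v g"
  shows "g \<in> borel_measurable (restrict_space lborel D)"
proof -
  obtain \<D> where \<D>: "countable \<D>" "\<D> \<subseteq> Pow D" "\<And>X. X \<in> \<D> \<Longrightarrow> \<exists>a b. X = cbox a b"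
    and "\<Union>\<D> = D"
    using open_countable_Union_open_cbox[OF D] by metis
  have D_sets: "D \<in> sets lborel" using D by simp
  show ?thesis
  proof (rule measurable_piecewise_restrict[OF \<D>(1)])
    fix X assume X: "X \<in> \<D>"
    then obtain a b where "X = cbox a b" using \<D>(3) by blast
    moreover have XD: "X \<subseteq> D" using X \<D>(2) by blast
    ultimately have X_sets: "X \<in> sets lborel" and "set_integrable lborel X g"
      using g unfolding is_weak_grad_def by auto
    then have "g \<in> borel_measurable (restrict_space lborel X)"
      by (subst borel_measurable_restrict_space_iff) (auto simp: set_integrable_def)
    moreover have "restrict_space (restrict_space lborel D) X = restrict_space lborel X"
      using XD X_sets D_sets by (subst restrict_restrict_space) (auto simp: Int_absorb1)
    ultimately show "g \<in> borel_measurable (restrict_space (restrict_space lborel D) X)" by simp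
    show "X \<inter> space (restrict_space lborel D) \<in> sets (restrict_space lborel D)"
      using XD X_sets D_sets by (auto simp: sets_restrict_space_iff)
  qed (use \<open>\<Union>\<D> = D\<close> in \<open>auto simp: space_restrict_space\<close>)
qed

lemma wgrad_is_weak_grad:
  assumes "v \<in> H10 D"
  shows "is_weak_grad D v (wgrad D v)"
proof -
  obtain g where "is_weak_grad D v g"
    using assms unfolding H10_def by blast
  then show ?thesis
    unfolding wgrad_def by (rule someI[where P="is_weak_grad D v"])
qed

lemma is_weak_grad_zero: "is_weak_grad D (\<lambda>x::real^'d::finite. 0::real) (\<lambda>x. 0)"
  unfolding is_weak_grad_def set_integrable_def by simp

lemma H10_zero: "(\<lambda>x::real^'d::finite. 0::real) \<in> H10 D"
proof -
  have "frechet_derivative (\<lambda>x::real^'d. 0::real) (at x) = (\<lambda>h. 0)" for x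
    using frechet_derivative_at[OF has_derivative_const[of 0 "at x"]] by simp
  then have "grad (\<lambda>x::real^'d. 0::real) = (\<lambda>x. 0)"
    by (simp add: grad_def partial_def vec_eq_iff fun_eq_iff)
  moreover have "test_fun D (\<lambda>x::real^'d. 0::real)"
    unfolding test_fun_def by (auto intro: coordwise_smooth_imp_smooth_on coordwise_smooth.const)
  ultimately show ?thesis
    unfolding H10_def
    by (intro CollectI exI[of _ "\<lambda>x. 0"] conjI is_weak_grad_zero exI[of _ "\<lambda>k x. 0"] allI)
       (simp_all add: set_integrable_def)
qed

lemma Hminus1_zero: "f \<in> Hminus1 D \<Longrightarrow> f (\<lambda>x::real^'d::finite. 0::real) = 0"
  unfolding Hminus1_def using H10_zero[of D]
  by (auto dest!: bspec[of _ _ "\<lambda>x. 0"] spec[of _ 0])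

lemma Hminus1_bound_weak_grad:
  fixes D :: "(real^'d::finite) set"
  assumes D: "open D" and f: "f \<in> Hminus1 D"
  obtains B where "0 \<le> B"
    "\<And>v g. v \<in> H10 D \<Longrightarrow> is_weak_grad D v g \<Longrightarrow> \<bar>f v\<bar> \<le> B * sqrt (LINT x:D|lborel. (norm (g x))\<^sup>2)"
proof -
  obtain B where B: "\<And>v. v \<in> H10 D \<Longrightarrow> \<bar>f v\<bar> \<le> B * sqrt (LINT x:D|lborel. (norm (wgrad D v x))\<^sup>2)"
    using f unfolding Hminus1_def by blast
  have D_sets: "D \<in> sets lborel" using D by simp
  show thesis
  proof (rule that[of "max B 0"])
    fix v g assume v: "v \<in> H10 D" and g: "is_weak_grad D v g"
    have [measurable]: "wgrad D v \<in> borel_measurable (restrict_space lborel D)"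
      "g \<in> borel_measurable (restrict_space lborel D)"
      using is_weak_grad_measurable[OF D] wgrad_is_weak_grad[OF v] g by blast+
    have "(LINT x:D|lborel. (norm (wgrad D v x))\<^sup>2) = (LINT x:D|lborel. (norm (g x))\<^sup>2)"
      unfolding set_integral_eq_integral_restrict_space[OF D_sets]
    proof (rule integral_cong_AE)
      show "AE x in restrict_space lborel D. (norm (wgrad D v x))\<^sup>2 = (norm (g x))\<^sup>2"
        using is_weak_grad_unique[OF D wgrad_is_weak_grad[OF v] g]
        by (subst AE_restrict_space_iff) (auto simp: D elim: AE_mp)
    qed measurable
    then have "\<bar>f v\<bar> \<le> B * sqrt (LINT x:D|lborel. (norm (g x))\<^sup>2)"
      using B[OF v] by simp
    also have "\<dots> \<le> max B 0 * sqrt (LINT x:D|lborel. (norm (g x))\<^sup>2)"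
      by (intro mult_right_mono) (auto simp: set_lebesgue_integral_def)
    finally show "\<bar>f v\<bar> \<le> max B 0 * sqrt (LINT x:D|lborel. (norm (g x))\<^sup>2)" .
  qed simp
qed

lemma X_grad_ok_Xgrad: "X_grad_ok D \<Gamma> u G \<Longrightarrow> X_grad_ok D \<Gamma> u (Xgrad D \<Gamma> u)"
  unfolding Xgrad_def by (rule someI[where P="X_grad_ok D \<Gamma> u"])

lemma Xgrad_AE_eq:
  assumes D: "open D" and G: "X_grad_ok D \<Gamma> u G"
  shows "AE y in \<Gamma>. AE x in lborel. x \<in> D \<longrightarrow> Xgrad D \<Gamma> u x y = G x y"
proof -
  have "AE y in \<Gamma>. is_weak_grad D (\<lambda>x. u x y) (\<lambda>x. Xgrad D \<Gamma> u x y)"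
    "AE y in \<Gamma>. is_weak_grad D (\<lambda>x. u x y) (\<lambda>x. G x y)"
    using X_grad_ok_Xgrad[OF G] G unfolding X_grad_ok_def by auto
  then show ?thesis
    by eventually_elim (rule is_weak_grad_unique[OF D])
qed

lemma X_grad_ok_mult_indicator:
  assumes G: "X_grad_ok D \<Gamma> u G" and A: "A \<in> sets \<Gamma>"
  shows "X_grad_ok D \<Gamma> (\<lambda>x y. u x y * indicator A y) (\<lambda>x y. indicator A y *\<^sub>R G x y)"
proof -
  let ?M = "restrict_space lborel D \<Otimes>\<^sub>M \<Gamma>"
  have "(\<lambda>(x, y). indicator A y :: real) \<in> borel_measurable ?M"
    using measurable_compose[OF measurable_snd borel_measurable_indicator[OF A]]
    by (simp add: case_prod_beta')
  moreover have "(\<lambda>(x, y). u x y) \<in> borel_measurable ?M" "(\<lambda>(x, y). G x y) \<in> borel_measurable ?M"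
    using G unfolding X_grad_ok_def by auto
  ultimately have "(\<lambda>(x, y). u x y * indicator A y) \<in> borel_measurable ?M"
    "(\<lambda>(x, y). indicator A y *\<^sub>R G x y) \<in> borel_measurable ?M"
    using borel_measurable_times borel_measurable_scaleR by (fastforce simp: case_prod_beta')+
  moreover have "AE y in \<Gamma>. (\<lambda>x. u x y) \<in> H10 D \<and> is_weak_grad D (\<lambda>x. u x y) (\<lambda>x. G x y)"
    using G unfolding X_grad_ok_def by blast
  then have "AE y in \<Gamma>. (\<lambda>x. u x y * indicator A y) \<in> H10 D
      \<and> is_weak_grad D (\<lambda>x. u x y * indicator A y) (\<lambda>x. indicator A y *\<^sub>R G x y)"
  proof eventually_elim
    case (elim y)
    then show ?case by (cases "y \<in> A") (simp_all add: H10_zero is_weak_grad_zero)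
  qed
  ultimately show ?thesis
    unfolding X_grad_ok_def by blast
qed

lemma X_space_mult_indicator:
  assumes u: "u \<in> X_space D \<Gamma>" and A: "A \<in> sets \<Gamma>"
  shows "(\<lambda>x y. u x y * indicator A y) \<in> X_space D \<Gamma>"
proof -
  obtain G where G: "X_grad_ok D \<Gamma> u G"
    and fin: "(\<integral>\<^sup>+ y. (\<integral>\<^sup>+ x. indicator D x * ennreal ((norm (G x y))\<^sup>2) \<partial>lborel) \<partial>\<Gamma>) < \<infinity>"
    using u unfolding X_space_def by blast
  have "(\<integral>\<^sup>+ y. (\<integral>\<^sup>+ x. indicator D x * ennreal ((norm (indicator A y *\<^sub>R G x y))\<^sup>2) \<partial>lborel) \<partial>\<Gamma>)
      \<le> (\<integral>\<^sup>+ y. (\<integral>\<^sup>+ x. indicator D x * ennreal ((norm (G x y))\<^sup>2) \<partial>lborel) \<partial>\<Gamma>)"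
    by (intro nn_integral_mono mult_left_mono ennreal_leI) (auto simp: indicator_def)
  then show ?thesis
    using X_grad_ok_mult_indicator[OF G A] fin unfolding X_space_def
    by (blast intro: le_less_trans)
qed

lemma a_form_mult_indicator:
  fixes C :: "real^'d::finite \<Rightarrow> 'y \<Rightarrow> real^'d^'d"
  assumes D: "open D" and G: "X_grad_ok D \<Gamma> u G" and A: "A \<in> sets \<Gamma>"
    and C: "(\<lambda>(x, y). C x y) \<in> borel_measurable (restrict_space lborel D \<Otimes>\<^sub>M \<Gamma>)"
  shows "a_form D \<Gamma> C u (\<lambda>x y. u x y * indicator A y)
       = (\<integral>y. indicator A y * (LINT x:D|lborel. G x y \<bullet> (C x y *v G x y)) \<partial>\<Gamma>)"
proof -
  define L where "L = restrict_space lborel D"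
  define v where "v = (\<lambda>x y. u x y * indicator A y)"
  define Q where "Q x y = G x y \<bullet> (C x y *v G x y)" for x y
  define P where "P x y = Xgrad D \<Gamma> v x y \<bullet> (C x y *v Xgrad D \<Gamma> u x y)" for x y
  have D_sets: "D \<in> sets lborel" using D by simp
  have Gv: "X_grad_ok D \<Gamma> v (\<lambda>x y. indicator A y *\<^sub>R G x y)"
    unfolding v_def by (rule X_grad_ok_mult_indicator[OF G A])
  have "(\<lambda>(x, y). G x y) \<in> borel_measurable (L \<Otimes>\<^sub>M \<Gamma>)"
    "(\<lambda>(x, y). Xgrad D \<Gamma> u x y) \<in> borel_measurable (L \<Otimes>\<^sub>M \<Gamma>)"
    "(\<lambda>(x, y). Xgrad D \<Gamma> v x y) \<in> borel_measurable (L \<Otimes>\<^sub>M \<Gamma>)"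
    using G X_grad_ok_Xgrad[OF G] X_grad_ok_Xgrad[OF Gv] unfolding X_grad_ok_def L_def by auto
  with C have Q: "(\<lambda>(x, y). Q x y) \<in> borel_measurable (L \<Otimes>\<^sub>M \<Gamma>)"
    and P: "(\<lambda>(x, y). P x y) \<in> borel_measurable (L \<Otimes>\<^sub>M \<Gamma>)"
    unfolding Q_def P_def L_def by (auto intro: borel_measurable_inner_matrix_vector_pair)
  have "AE y in \<Gamma>. (\<integral>x. P x y \<partial>L) = indicator A y * (\<integral>x. Q x y \<partial>L)"
    using Xgrad_AE_eq[OF D Gv] Xgrad_AE_eq[OF D G] AE_space
  proof eventually_elim
    case (elim y)
    have "AE x in lborel. x \<in> D \<longrightarrow> P x y = indicator A y * Q x y"
      using elim(1,2) by eventually_elim (auto simp: P_def Q_def)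
    then have "(\<integral>x. P x y \<partial>L) = (\<integral>x. indicator A y * Q x y \<partial>L)"
      using borel_measurable_section[OF P elim(3)] borel_measurable_section[OF Q elim(3)]
      unfolding L_def by (intro integral_cong_AE) (auto simp: AE_restrict_space_iff D)
    then show ?case by simp
  qed
  moreover have "sigma_finite_measure L"
    unfolding L_def by (rule sigma_finite_measure_restrict_space[OF sigma_finite_lborel D_sets])
  ultimately have "(\<integral>y. (\<integral>x. P x y \<partial>L) \<partial>\<Gamma>) = (\<integral>y. indicator A y * (\<integral>x. Q x y \<partial>L) \<partial>\<Gamma>)"
    using borel_measurable_integral_left[OF _ P] borel_measurable_integral_left[OF _ Q] A
    by (intro integral_cong_AE) auto
  then show ?thesis
    unfolding a_form_def set_integral_eq_integral_restrict_space[OF D_sets]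
    by (simp add: P_def Q_def L_def v_def)
qed

lemma F_form_mult_indicator:
  assumes "f \<in> Hminus1 D"
  shows "F_form \<Gamma> f (\<lambda>x y. u x y * indicator A y) = (\<integral>y. indicator A y * f (\<lambda>x. u x y) \<partial>\<Gamma>)"
  unfolding F_form_def
proof (rule Bochner_Integration.integral_cong[OF refl])
  show "f (\<lambda>x. u x y * indicator A y) = indicator A y * f (\<lambda>x. u x y)" for y
    by (cases "y \<in> A") (simp_all add: Hminus1_zero[OF assms])
qed

lemma X_weighted_if_AE_nn_integral_le:
  fixes K :: "real^'d::finite \<Rightarrow> 'y \<Rightarrow> real^'d^'d"
  assumes D: "open D" and G: "X_grad_ok D \<Gamma> v G"
    and K: "(\<lambda>(x, y). K x y) \<in> borel_measurable (restrict_space lborel D \<Otimes>\<^sub>M \<Gamma>)"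
    and w: "integrable \<Gamma> w" "\<And>y. 0 \<le> w y" and b: "0 \<le> b"
    and bound: "AE y in \<Gamma>. (\<integral>\<^sup>+x. indicator D x * ennreal (G x y \<bullet> (K x y *v G x y)) \<partial>lborel) \<le> ennreal b"
  shows "v \<in> X_weighted D \<Gamma> w K"
proof -
  define L where "L = restrict_space lborel D"
  define Q where "Q x y = G x y \<bullet> (K x y *v G x y)" for x y
  have D_sets: "D \<in> sets lborel" using D by simp
  have "(\<lambda>(x, y). Q x y) \<in> borel_measurable (L \<Otimes>\<^sub>M \<Gamma>)"
    using G K unfolding X_grad_ok_def Q_def L_def by (auto intro: borel_measurable_inner_matrix_vector_pair)
  then have Q: "(\<lambda>x. ennreal (Q x y)) \<in> borel_measurable L" if "y \<in> space \<Gamma>" for y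
    using measurable_compose[OF borel_measurable_section[OF _ that] measurable_ennreal] by blast
  have "(\<integral>\<^sup>+ y. (\<integral>\<^sup>+ x. indicator D x * ennreal (w y * Q x y) \<partial>lborel) \<partial>\<Gamma>)
      = (\<integral>\<^sup>+ y. ennreal (w y) * (\<integral>\<^sup>+ x. indicator D x * ennreal (Q x y) \<partial>lborel) \<partial>\<Gamma>)"
  proof (rule nn_integral_cong)
    fix y assume "y \<in> space \<Gamma>"
    then show "(\<integral>\<^sup>+ x. indicator D x * ennreal (w y * Q x y) \<partial>lborel)
        = ennreal (w y) * (\<integral>\<^sup>+ x. indicator D x * ennreal (Q x y) \<partial>lborel)"
      unfolding nn_integral_indicator_eq_restrict_space[OF D_sets] L_def[symmetric]
      by (simp add: ennreal_mult' w(2) nn_integral_cmult Q)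
  qed
  also have "\<dots> \<le> (\<integral>\<^sup>+ y. ennreal (w y * b) \<partial>\<Gamma>)"
  proof (rule nn_integral_mono_AE)
    show "AE y in \<Gamma>. ennreal (w y) * (\<integral>\<^sup>+ x. indicator D x * ennreal (Q x y) \<partial>lborel) \<le> ennreal (w y * b)"
      using bound unfolding Q_def by eventually_elim (simp add: ennreal_mult w(2) b mult_left_mono)
  qed
  also have "\<dots> < \<infinity>"
    using integrableD(2)[OF integrable_mult_left[OF w(1), of b]] w(2) b
    by (simp add: less_top[symmetric] mult.commute)
  finally show ?thesis
    using G unfolding X_weighted_def Q_def by blast
qed

lemma integrable_quadratic_form:
  fixes G :: "'a \<Rightarrow> real^'d::finite" and K :: "'a \<Rightarrow> real^'d^'d"
  assumes G: "G \<in> borel_measurable M" and K: "K \<in> borel_measurable M"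
    and int: "integrable M (\<lambda>x. (norm (G x))\<^sup>2)"
    and bounds: "AE x in M. \<forall>h. \<alpha> * (norm h)\<^sup>2 \<le> h \<bullet> (K x *v h) \<and> h \<bullet> (K x *v h) \<le> \<beta> * (norm h)\<^sup>2"
    and \<alpha>: "0 \<le> \<alpha>"
  shows "integrable M (\<lambda>x. G x \<bullet> (K x *v G x))"
    and "\<alpha> * (\<integral>x. (norm (G x))\<^sup>2 \<partial>M) \<le> (\<integral>x. G x \<bullet> (K x *v G x) \<partial>M)"
proof -
  show int_Q: "integrable M (\<lambda>x. G x \<bullet> (K x *v G x))"
  proof (rule Bochner_Integration.integrable_bound[where f="\<lambda>x. \<beta> * (norm (G x))\<^sup>2"])
    show "AE x in M. norm (G x \<bullet> (K x *v G x)) \<le> norm (\<beta> * (norm (G x))\<^sup>2)"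
      using bounds
    proof eventually_elim
      case (elim x)
      then have "0 \<le> G x \<bullet> (K x *v G x)" "G x \<bullet> (K x *v G x) \<le> \<beta> * (norm (G x))\<^sup>2"
        using \<alpha> by (auto intro: order_trans[rotated])
      then show ?case by simp
    qed
  qed (use int G K in \<open>auto intro: borel_measurable_inner_matrix_vector\<close>)
  have "(\<integral>x. \<alpha> * (norm (G x))\<^sup>2 \<partial>M) \<le> (\<integral>x. G x \<bullet> (K x *v G x) \<partial>M)"
    using bounds int int_Q by (intro integral_mono_AE) (auto elim: AE_mp)
  then show "\<alpha> * (\<integral>x. (norm (G x))\<^sup>2 \<partial>M) \<le> (\<integral>x. G x \<bullet> (K x *v G x) \<partial>M)"
    by simp
qed

subsection \<open>A localisation argument\<close>

text \<open>The proof integrates over the sets \<open>{c\<^sup>2 < q \<le> n}\<close>, on which every integral involved is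
  finite; \<open>g\<close> may fail to be integrable there, but then its integral is \<open>0\<close>.\<close>

lemma (in finite_measure) AE_le_square_if_set_integrals_le:
  fixes q g :: "'a \<Rightarrow> real"
  assumes q[measurable]: "q \<in> borel_measurable M" and c: "0 \<le> c"
    and g: "AE x in M. g x \<le> c * sqrt (q x)"
    and le: "\<And>A. A \<in> sets M \<Longrightarrow> (\<integral>x. indicator A x * q x \<partial>M) \<le> (\<integral>x. indicator A x * g x \<partial>M)"
  shows "AE x in M. q x \<le> c\<^sup>2"
proof -
  define A where "A n = {x \<in> space M. c\<^sup>2 < q x \<and> q x \<le> real n}" for n :: nat
  have A_sets[measurable]: "A n \<in> sets M" for n
    unfolding A_def by measurable
  have "AE x in M. x \<notin> A n" for n
  proof -
    define s where "s x = indicator (A n) x * (c * sqrt (q x))" for x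
    define h where "h x = indicator (A n) x * q x - s x" for x
    have q_A: "0 \<le> q x" "q x \<le> real n" "c\<^sup>2 < q x" if "x \<in> A n" for x
      using that c unfolding A_def by (auto intro: order_trans[OF zero_le_power2 less_imp_le])
    have int_q: "integrable M (\<lambda>x. indicator (A n) x * q x)"
    proof (rule integrable_const_bound[where B="real n"])
      show "AE x in M. norm (indicator (A n) x * q x) \<le> real n"
        by (auto simp: q_A indicator_def)
    qed measurable
    have int_s: "integrable M s"
      unfolding s_def
      by (rule integrable_const_bound[where B="c * sqrt (real n)"])
         (auto simp: A_sets q_A c indicator_def abs_mult intro!: mult_left_mono)
    have s_nonneg: "0 \<le> s x" for x
      by (auto simp: s_def q_A c indicator_def)
    have h_pos: "0 < h x" if "x \<in> A n" for x
    proof -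
      have "c < sqrt (q x)"
        using real_sqrt_less_mono[OF q_A(3)[OF that]] c by simp
      then have "0 < sqrt (q x) * (sqrt (q x) - c)"
        using c by (intro mult_pos_pos) linarith+
      also have "\<dots> = h x"
        using that q_A(1)[OF that] by (simp add: h_def s_def algebra_simps)
      finally show ?thesis .
    qed
    have h_nonneg: "0 \<le> h x" for x
      using h_pos[of x] by (cases "x \<in> A n") (auto simp: h_def s_def)
    have "(\<integral>x. indicator (A n) x * g x \<partial>M) \<le> (\<integral>x. s x \<partial>M)"
    proof (cases "integrable M (\<lambda>x. indicator (A n) x * g x)")
      case True
      then show ?thesis
        using g by (intro integral_mono_AE int_s) (auto simp: s_def indicator_def elim: AE_mp)
    qed (simp add: not_integrable_integral_eq s_nonneg)
    then have "(\<integral>x. indicator (A n) x * q x \<partial>M) \<le> (\<integral>x. s x \<partial>M)"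
      by (rule order_trans[OF le[OF A_sets]])
    then have "(\<integral>x. h x \<partial>M) \<le> 0"
      unfolding h_def by (simp add: Bochner_Integration.integral_diff[OF int_q int_s])
    moreover have int_h: "integrable M h"
      unfolding h_def using int_q int_s by simp
    moreover have "0 \<le> (\<integral>x. h x \<partial>M)"
      by (rule Bochner_Integration.integral_nonneg) (rule h_nonneg)
    ultimately have "(\<integral>x. h x \<partial>M) = 0"
      by simp
    then have "AE x in M. h x = 0"
      using integral_nonneg_eq_0_iff_AE[OF int_h] h_nonneg by simp
    then show ?thesis
      by eventually_elim (use h_pos in force)
  qed
  then have "AE x in M. \<forall>n. x \<notin> A n"
    by (subst AE_all_countable) blast
  then show ?thesis
  proof (rule AE_mp, intro AE_I2 impI)
    fix x assume "x \<in> space M" "\<forall>n. x \<notin> A n"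
    moreover obtain n :: nat where "q x \<le> real n"
      using real_arch_simple by blast
    ultimately show "q x \<le> c\<^sup>2"
      unfolding A_def by force
  qed
qed

subsection \<open>The energy of the solution\<close>

locale stochastic_diffusion_problem = prob_space \<Gamma>
  for \<Gamma> :: "'y measure" +
  fixes D :: "(real^'d::finite) set"
    and C :: "real^'d \<Rightarrow> 'y \<Rightarrow> real^'d^'d" and \<alpha> :: real and \<gamma> :: "'y \<Rightarrow> real"
    and f :: "(real^'d \<Rightarrow> real) \<Rightarrow> real"
    and u :: "real^'d \<Rightarrow> 'y \<Rightarrow> real" and G :: "real^'d \<Rightarrow> 'y \<Rightarrow> real^'d"
  assumes D_open: "open D"
    and f_dual: "f \<in> Hminus1 D"
    and C_meas: "(\<lambda>(x, y). C x y) \<in> borel_measurable (restrict_space lborel D \<Otimes>\<^sub>M \<Gamma>)"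
    and \<alpha>_pos: "0 < \<alpha>"
    and \<gamma>_nonneg: "\<And>y. 0 \<le> \<gamma> y"
    and C_bounds: "AE y in \<Gamma>. AE x in lborel. x \<in> D \<longrightarrow>
        (\<forall>h. \<alpha> * (norm h)\<^sup>2 \<le> h \<bullet> (C x y *v h) \<and> h \<bullet> (C x y *v h) \<le> \<gamma> y * (norm h)\<^sup>2)"
    and G: "X_grad_ok D \<Gamma> u G"
    and G_finite: "(\<integral>\<^sup>+ y. (\<integral>\<^sup>+ x. indicator D x * ennreal ((norm (G x y))\<^sup>2) \<partial>lborel) \<partial>\<Gamma>) < \<infinity>"
    and u_solves: "\<forall>v\<in>X_space D \<Gamma>. a_form D \<Gamma> C u v = F_form \<Gamma> f v"
begin

abbreviation "L \<equiv> restrict_space lborel D"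

definition energy :: "'y \<Rightarrow> real" where
  "energy y = (LINT x:D|lborel. G x y \<bullet> (C x y *v G x y))"

lemma D_sets: "D \<in> sets lborel"
  using D_open by simp

lemma sigma_finite_L: "sigma_finite_measure L"
  by (rule sigma_finite_measure_restrict_space[OF sigma_finite_lborel D_sets])

lemma G_measurable: "(\<lambda>(x, y). G x y) \<in> borel_measurable (L \<Otimes>\<^sub>M \<Gamma>)"
  using G unfolding X_grad_ok_def by blast

lemma energy_integrand_measurable: "(\<lambda>(x, y). G x y \<bullet> (C x y *v G x y)) \<in> borel_measurable (L \<Otimes>\<^sub>M \<Gamma>)"
  by (rule borel_measurable_inner_matrix_vector_pair[OF C_meas G_measurable G_measurable])

lemma energy_measurable: "energy \<in> borel_measurable \<Gamma>"
  unfolding energy_def set_integral_eq_integral_restrict_space[OF D_sets]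
  by (rule borel_measurable_integral_left[OF sigma_finite_L energy_integrand_measurable])

lemma set_integral_energy:
  assumes A: "A \<in> sets \<Gamma>"
  shows "(\<integral>y. indicator A y * energy y \<partial>\<Gamma>) = (\<integral>y. indicator A y * f (\<lambda>x. u x y) \<partial>\<Gamma>)"
proof -
  have "u \<in> X_space D \<Gamma>"
    using G G_finite unfolding X_space_def by blast
  then have "a_form D \<Gamma> C u (\<lambda>x y. u x y * indicator A y) = F_form \<Gamma> f (\<lambda>x y. u x y * indicator A y)"
    using u_solves X_space_mult_indicator[OF _ A] by blast
  then show ?thesis
    by (simp add: a_form_mult_indicator[OF D_open G A C_meas] F_form_mult_indicator[OF f_dual] energy_def)
qed

lemma AE_slice_gradient_energy:
  "AE y in \<Gamma>. (\<lambda>x. u x y) \<in> H10 D \<and> is_weak_grad D (\<lambda>x. u x y) (\<lambda>x. G x y)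
     \<and> \<alpha> * (LINT x:D|lborel. (norm (G x y))\<^sup>2) \<le> energy y
     \<and> (\<integral>\<^sup>+x. indicator D x * ennreal (G x y \<bullet> (C x y *v G x y)) \<partial>lborel) = ennreal (energy y)
     \<and> (\<integral>\<^sup>+x. indicator D x * ennreal ((norm (G x y))\<^sup>2) \<partial>lborel)
         = ennreal (LINT x:D|lborel. (norm (G x y))\<^sup>2)"
proof -
  have "(\<lambda>v::real^'d. ennreal ((norm v)\<^sup>2)) \<in> borel_measurable borel"
    by measurable
  from measurable_compose[OF G_measurable this]
  have "(\<lambda>(x, y). ennreal ((norm (G x y))\<^sup>2)) \<in> borel_measurable (L \<Otimes>\<^sub>M \<Gamma>)"
    by (simp add: case_prod_beta')
  then have "AE y in \<Gamma>. (\<integral>\<^sup>+x. ennreal ((norm (G x y))\<^sup>2) \<partial>L) \<noteq> \<infinity>"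
    using G_finite borel_measurable_nn_integral_left[OF sigma_finite_L]
    by (intro nn_integral_PInf_AE) (simp_all add: nn_integral_indicator_eq_restrict_space[OF D_sets])
  moreover have "AE y in \<Gamma>. AE x in L.
      \<forall>h. \<alpha> * (norm h)\<^sup>2 \<le> h \<bullet> (C x y *v h) \<and> h \<bullet> (C x y *v h) \<le> \<gamma> y * (norm h)\<^sup>2"
    using C_bounds by (simp add: AE_restrict_space_iff D_open)
  moreover have "AE y in \<Gamma>. (\<lambda>x. u x y) \<in> H10 D \<and> is_weak_grad D (\<lambda>x. u x y) (\<lambda>x. G x y)"
    using G unfolding X_grad_ok_def by blast
  ultimately show ?thesis
    using AE_space
  proof eventually_elim
    case (elim y)
    have Gy: "(\<lambda>x. G x y) \<in> borel_measurable L" and Cy: "(\<lambda>x. C x y) \<in> borel_measurable L"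
      using borel_measurable_section[OF G_measurable elim(4)] borel_measurable_section[OF C_meas elim(4)]
      by auto
    have int_G: "integrable L (\<lambda>x. (norm (G x y))\<^sup>2)"
      using elim(1) Gy by (simp add: integrable_iff_bounded less_top)
    note Q = integrable_quadratic_form[OF Gy Cy int_G elim(2)]
    have "AE x in L. 0 \<le> G x y \<bullet> (C x y *v G x y)"
      using elim(2) by eventually_elim (meson \<alpha>_pos order_trans zero_le_mult_iff zero_le_power2 less_imp_le)
    with Q \<alpha>_pos int_G elim(3) show ?case
      by (simp add: energy_def set_integral_eq_integral_restrict_space[OF D_sets]
          nn_integral_indicator_eq_restrict_space[OF D_sets] nn_integral_eq_integral)
  qed
qed

lemma slice_value_le_sqrt_energy:
  obtains c where "0 \<le> c" "AE y in \<Gamma>. f (\<lambda>x. u x y) \<le> c * sqrt (energy y)"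
proof -
  obtain B where B: "0 \<le> B"
    "\<And>v g. v \<in> H10 D \<Longrightarrow> is_weak_grad D v g \<Longrightarrow> \<bar>f v\<bar> \<le> B * sqrt (LINT x:D|lborel. (norm (g x))\<^sup>2)"
    using Hminus1_bound_weak_grad[OF D_open f_dual] by blast
  have "AE y in \<Gamma>. f (\<lambda>x. u x y) \<le> B / sqrt \<alpha> * sqrt (energy y)"
    using AE_slice_gradient_energy
  proof eventually_elim
    case (elim y)
    have "f (\<lambda>x. u x y) \<le> B * sqrt (LINT x:D|lborel. (norm (G x y))\<^sup>2)"
      using B(2)[of "\<lambda>x. u x y" "\<lambda>x. G x y"] elim by linarith
    also have "\<dots> \<le> B * sqrt (energy y / \<alpha>)"
      using elim \<alpha>_pos B(1) by (intro mult_left_mono real_sqrt_le_mono) (simp_all add: field_simps)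
    also have "\<dots> = B / sqrt \<alpha> * sqrt (energy y)"
      by (simp add: real_sqrt_divide)
    finally show ?case .
  qed
  then show thesis
    using that[of "B / sqrt \<alpha>"] B(1) \<alpha>_pos by simp
qed

lemma energy_AE_bounded:
  obtains c where "AE y in \<Gamma>. energy y \<le> c\<^sup>2"
proof -
  obtain c where c: "0 \<le> c" "AE y in \<Gamma>. f (\<lambda>x. u x y) \<le> c * sqrt (energy y)"
    by (rule slice_value_le_sqrt_energy)
  have "AE y in \<Gamma>. energy y \<le> c\<^sup>2"
    by (rule AE_le_square_if_set_integrals_le[OF energy_measurable c]) (simp add: set_integral_energy)
  then show thesis by (rule that)
qed

lemma u_X_weighted:
  shows "u \<in> X_weighted D \<Gamma> (\<lambda>y. 1) C"
    and "integrable \<Gamma> \<gamma> \<Longrightarrow> u \<in> X_weighted D \<Gamma> \<gamma> C"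
    and "integrable \<Gamma> (\<lambda>y. (\<gamma> y)\<^sup>2) \<Longrightarrow> u \<in> X_weighted D \<Gamma> (\<lambda>y. (\<gamma> y)\<^sup>2) (\<lambda>x y. mat 1)"
proof -
  obtain c where c: "AE y in \<Gamma>. energy y \<le> c\<^sup>2"
    by (rule energy_AE_bounded)
  have "AE y in \<Gamma>. (\<integral>\<^sup>+x. indicator D x * ennreal (G x y \<bullet> (C x y *v G x y)) \<partial>lborel) \<le> ennreal (c\<^sup>2)"
    using AE_slice_gradient_energy c by eventually_elim (simp add: ennreal_leI)
  note X_weighted_C = X_weighted_if_AE_nn_integral_le[OF D_open G C_meas _ _ _ this]
  show "u \<in> X_weighted D \<Gamma> (\<lambda>y. 1) C"
    by (rule X_weighted_C) auto
  show "integrable \<Gamma> \<gamma> \<Longrightarrow> u \<in> X_weighted D \<Gamma> \<gamma> C"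
    by (rule X_weighted_C[OF _ \<gamma>_nonneg]) auto
  have "AE y in \<Gamma>. (\<integral>\<^sup>+x. indicator D x * ennreal (G x y \<bullet> (mat 1 *v G x y)) \<partial>lborel) \<le> ennreal (c\<^sup>2 / \<alpha>)"
    using AE_slice_gradient_energy c
  proof eventually_elim
    case (elim y)
    then have "(LINT x:D|lborel. (norm (G x y))\<^sup>2) \<le> c\<^sup>2 / \<alpha>"
      using \<alpha>_pos by (simp add: pos_le_divide_eq mult.commute)
    with elim show ?case
      by (simp add: power2_norm_eq_inner ennreal_leI)
  qed
  then show "integrable \<Gamma> (\<lambda>y. (\<gamma> y)\<^sup>2) \<Longrightarrow> u \<in> X_weighted D \<Gamma> (\<lambda>y. (\<gamma> y)\<^sup>2) (\<lambda>x y. mat 1)"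
    using \<alpha>_pos by (intro X_weighted_if_AE_nn_integral_le[OF D_open G]) auto
qed

end

theorem proposition7:
  fixes D :: "(real^'d) set"
    and \<Gamma>1 :: "(real^'g) measure" and \<Gamma>2 :: "(real^'v) measure"
    and f :: "(real^'d \<Rightarrow> real) \<Rightarrow> real"
    and C :: "real^'d \<Rightarrow> ((real^'g) \<times> (real^'v)) \<Rightarrow> real^'d^'d"
    and \<alpha> :: real and \<gamma> :: "(real^'g) \<times> (real^'v) \<Rightarrow> real"
    and u :: "real^'d \<Rightarrow> ((real^'g) \<times> (real^'v)) \<Rightarrow> real"
  defines "\<Gamma> \<equiv> \<Gamma>1 \<Otimes>\<^sub>M \<Gamma>2"
  assumes D_open: "open D" and D_bounded: "bounded D" and D_smooth: "smooth_boundary D"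
    and \<Gamma>1_prob: "prob_space \<Gamma>1" and \<Gamma>1_sets: "sets \<Gamma>1 = sets borel"
    and \<Gamma>2_prob: "prob_space \<Gamma>2" and \<Gamma>2_sets: "sets \<Gamma>2 = sets borel"
    and f_dual: "f \<in> Hminus1 D"
    and C_meas: "(\<lambda>(x,y). C x y) \<in> borel_measurable (restrict_space lborel D \<Otimes>\<^sub>M \<Gamma>)"
    and C_sym: "\<And>x y. x \<in> D \<Longrightarrow> transpose (C x y) = C x y"
    and C_pos: "\<And>x y h. x \<in> D \<Longrightarrow> h \<noteq> 0 \<Longrightarrow> h \<bullet> (C x y *v h) > 0"
    and \<alpha>_pos: "\<alpha> > 0"
    and \<gamma>_meas: "\<gamma> \<in> borel_measurable \<Gamma>"
    and \<gamma>_pos: "\<And>y. \<gamma> y > 0"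
    and C_bounds: "AE y in \<Gamma>. AE x in lborel. x \<in> D \<longrightarrow>
        (\<forall>h. \<alpha> * (norm h)\<^sup>2 \<le> h \<bullet> (C x y *v h) \<and> h \<bullet> (C x y *v h) \<le> \<gamma> y * (norm h)\<^sup>2)"
    and u_X: "u \<in> X_space D \<Gamma>"
    and u_sol: "\<forall>v\<in>X_space D \<Gamma>. a_form D \<Gamma> C u v = F_form \<Gamma> f v"
  shows "u \<in> X_weighted D \<Gamma> (\<lambda>y. 1) C \<and>
         (integrable \<Gamma> \<gamma> \<longrightarrow> u \<in> X_weighted D \<Gamma> \<gamma> C) \<and>
         (integrable \<Gamma> (\<lambda>y. (\<gamma> y)\<^sup>2) \<longrightarrow> u \<in> X_weighted D \<Gamma> (\<lambda>y. (\<gamma> y)\<^sup>2) (\<lambda>x y. mat 1))"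
proof -
  obtain G where G: "X_grad_ok D \<Gamma> u G"
    and G_finite: "(\<integral>\<^sup>+ y. (\<integral>\<^sup>+ x. indicator D x * ennreal ((norm (G x y))\<^sup>2) \<partial>lborel) \<partial>\<Gamma>) < \<infinity>"
    using u_X unfolding X_space_def by blast
  have "prob_space \<Gamma>"
    unfolding \<Gamma>_def by (rule prob_space_pair[OF \<Gamma>1_prob \<Gamma>2_prob])
  then interpret stochastic_diffusion_problem \<Gamma> D C \<alpha> \<gamma> f u G
    by (rule stochastic_diffusion_problem.intro[OF _ stochastic_diffusion_problem_axioms.intro[OF D_open
          f_dual C_meas \<alpha>_pos less_imp_le[OF \<gamma>_pos] C_bounds G G_finite u_sol]])
  show ?thesis
    using u_X_weighted by blast
qed

end
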